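(* Let $n>4$ and let $\mathcal{L}\subseteq\mathcal{L}_n$ be a linear subspace that is a Jordan algebra, is invariant under the conjugation action of $S_n$, contains $J$, and contains $W_n:=\{Q=(q_{ij})\in\mathcal{L}_n: Q=Q^T,\ q_{ii}=0\ \forall i\}$ (the submodule isomorphic to $\{n-2,2\}$). Then $\mathrm{Symm}_n\subseteq\mathcal{L}$.
   Context: $\mathbf{1}\in\mathbb{R}^n$ is the all-ones column vector; $\mathcal{L}_n=\{Q\in \mathrm{Mat}_n(\mathbb{R}): Q\mathbf{1}=0\}$; $J:=\frac1n\mathbf{1}\mathbf{1}^T-I_n$. $\mathrm{Symm}_n$ is the space of symmetric matrices in $\mathcal{L}_n$. For $\sigma\in S_n$, $K_\sigma$ is the permutation matrix with $e_iK_\sigma=e_{\sigma(i)}$, and $S_n$ acts by $\sigma\cdot X=K_\sigma^TXK_\sigma$. A Jordan algebra is a subspace closed under $AB+BA$. *)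

theory Defs
  imports "HOL-Analysis.Analysis" "HOL-Combinatorics.Permutations"
begin

definition ones :: "real ^ 'n" where
  "ones = (\<chi> i. 1)"

definition Ln :: "(real ^ 'n ^ 'n) set" where
  "Ln = {Q. Q *v ones = 0}"

definition Jmat :: "real ^ 'n ^ 'n" where
  "Jmat = (\<chi> i j. 1 / real CARD('n) - (if i = j then 1 else 0))"

definition Symm :: "(real ^ 'n ^ 'n) set" where
  "Symm = {Q \<in> Ln. transpose Q = Q}"

definition Wn :: "(real ^ 'n ^ 'n) set" where
  "Wn = {Q \<in> Ln. transpose Q = Q \<and> (\<forall>i. Q $ i $ i = 0)}"

text \<open>Permutation matrix: row i of K_sigma is e_(sigma i), i.e. e_i K_sigma = e_(sigma i).\<close>
definition Kperm :: "('n \<Rightarrow> 'n) \<Rightarrow> real ^ 'n ^ 'n" where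
  "Kperm \<sigma> = (\<chi> i j. if \<sigma> i = j then 1 else 0)"

definition perm_act :: "('n \<Rightarrow> 'n) \<Rightarrow> real ^ 'n ^ 'n \<Rightarrow> real ^ 'n ^ 'n" where
  "perm_act \<sigma> X = transpose (Kperm \<sigma>) ** X ** Kperm \<sigma>"

definition jordan_closed :: "(real ^ 'n ^ 'n) set \<Rightarrow> bool" where
  "jordan_closed L \<longleftrightarrow> (\<forall>A\<in>L. \<forall>B\<in>L. A ** B + B ** A \<in> L)"

end

theory Submission
  imports Defs
begin

text \<open>For distinct p, q, r, s the signed 4-cycle matrix E_pq - E_qr + E_rs - E_sp lies in W_n, and
  the diagonal of its Jordan square is 4 (e_p + e_q + e_r + e_s). Subtracting two such squares
  that share three indices yields symmetric elements of L with diagonal e_m - e_z; these span all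
  zero-trace diagonals, and J supplies a diagonal of nonzero trace. So every diagonal is the
  diagonal of a symmetric element R of L, and a symmetric Q \<in> L_n with the same diagonal
  satisfies Q - R \<in> W_n \<subseteq> L.\<close>

lemma subspace_Ln: "subspace (Ln :: (real ^ 'n ^ 'n) set)"
proof -
  have "(c *\<^sub>R A) *v x = c *\<^sub>R (A *v x)" for c and A :: "real ^ 'n ^ 'n" and x
    by (simp add: matrix_vector_mult_def vec_eq_iff sum_distrib_left mult.assoc)
  then show ?thesis unfolding subspace_def Ln_def
    by (simp add: matrix_vector_mult_add_rdistrib)
qed

lemma subspace_symmetric_matrices: "subspace {Q :: real ^ 'n ^ 'n. transpose Q = Q}"
  unfolding subspace_def by (simp add: transpose_scalar vec_eq_iff transpose_def)

definition sym_diagonals :: "(real ^ 'n ^ 'n) set \<Rightarrow> (real ^ 'n) set" where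
  "sym_diagonals L = (\<lambda>R. \<chi> i. R $ i $ i) ` (L \<inter> {R. transpose R = R})"

lemma subspace_sym_diagonals:
  assumes "subspace L"
  shows "subspace (sym_diagonals L)"
proof -
  have "linear (\<lambda>R :: real ^ 'n ^ 'n. \<chi> i. R $ i $ i)"
    by (rule linearI) (simp_all add: vec_eq_iff)
  then show ?thesis unfolding sym_diagonals_def
    using linear_subspace_image subspace_inter assms subspace_symmetric_matrices by blast
qed

definition sym_unit :: "'n::finite \<Rightarrow> 'n \<Rightarrow> real ^ 'n ^ 'n" where
  "sym_unit a b = (\<chi> x y. (if x = a \<and> y = b then 1 else 0) + (if x = b \<and> y = a then 1 else 0))"

definition cycle_matrix :: "'n::finite \<Rightarrow> 'n \<Rightarrow> 'n \<Rightarrow> 'n \<Rightarrow> real ^ 'n ^ 'n" where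
  "cycle_matrix p q r s = sym_unit p q - sym_unit q r + sym_unit r s - sym_unit s p"

lemma cycle_matrix_entry:
  "cycle_matrix p q r s $ x $ y =
     (if x = p \<and> y = q then 1 else 0) + (if x = q \<and> y = p then 1 else 0)
   - (if x = q \<and> y = r then 1 else 0) - (if x = r \<and> y = q then 1 else 0)
   + (if x = r \<and> y = s then 1 else 0) + (if x = s \<and> y = r then 1 else 0)
   - (if x = s \<and> y = p then 1 else 0) - (if x = p \<and> y = s then 1 else 0)"
  by (simp add: cycle_matrix_def sym_unit_def)

lemma transpose_sym_unit: "transpose (sym_unit a b) = sym_unit a b"
  unfolding sym_unit_def transpose_def by (simp add: vec_eq_iff add.commute conj_commute)

lemma transpose_cycle_matrix: "transpose (cycle_matrix p q r s) = cycle_matrix p q r s"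
proof -
  have "cycle_matrix p q r s \<in> {Q. transpose Q = Q}"
    unfolding cycle_matrix_def
    by (intro subspace_add subspace_diff subspace_symmetric_matrices) (simp_all add: transpose_sym_unit)
  then show ?thesis by simp
qed

lemma cycle_matrix_in_Ln: "cycle_matrix p q r s \<in> Ln"
proof -
  have row: "(\<Sum>y\<in>UNIV. sym_unit a b $ x $ y) = (if x = a then 1 else 0) + (if x = b then 1 else 0)"
    for a b x
    unfolding sym_unit_def by (simp add: sum.distrib)
  have "(cycle_matrix p q r s *v ones) $ x = 0" for x
    by (simp add: matrix_vector_mult_def ones_def cycle_matrix_def sum_subtractf sum.distrib row)
  then show ?thesis unfolding Ln_def by (simp add: vec_eq_iff)
qed

lemma cycle_matrix_in_Wn:
  assumes "p \<noteq> q" "q \<noteq> r" "r \<noteq> s" "s \<noteq> p"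
  shows "cycle_matrix p q r s \<in> Wn"
  using assms unfolding Wn_def
  by (simp add: cycle_matrix_in_Ln transpose_cycle_matrix cycle_matrix_entry)

lemma cycle_matrix_square_diagonal:
  assumes "distinct [p, q, r, s]"
  shows "(cycle_matrix p q r s ** cycle_matrix p q r s) $ x $ x =
     2 * ((if x = p then 1 else 0) + (if x = q then 1 else 0)
        + (if x = r then 1 else 0) + (if x = s then 1 else 0))"
proof -
  let ?C = "cycle_matrix p q r s"
  let ?ind = "\<lambda>a y :: 'n. if y = a then 1 else (0 :: real)"
  \<comment> \<open>the squared entries form the adjacency matrix of the 4-cycle p q r s\<close>
  have entry_sq: "?C $ x $ y * ?C $ x $ y =
      (?ind p x + ?ind r x) * (?ind q y + ?ind s y) + (?ind q x + ?ind s x) * (?ind p y + ?ind r y)"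
    for y using assms by (auto simp: cycle_matrix_entry)
  have "(?C ** ?C) $ x $ x = (\<Sum>y\<in>UNIV. ?C $ x $ y * ?C $ x $ y)"
    using transpose_cycle_matrix[of p q r s]
    by (simp add: matrix_matrix_mult_def vec_eq_iff transpose_def)
  also have "\<dots> = 2 * (?ind p x + ?ind q x + ?ind r x + ?ind s x)"
    by (simp add: entry_sq sum.distrib distrib_left flip: sum_distrib_left)
  finally show ?thesis .
qed

lemma axis_diff_in_sym_diagonals:
  fixes L :: "(real ^ 'n ^ 'n) set"
  assumes "CARD('n) > 4" "subspace L" "jordan_closed L" "Wn \<subseteq> L" "m \<noteq> z"
  shows "axis m 1 - axis z 1 \<in> sym_diagonals L"
proof -
  have "card (UNIV - {m, z}) \<ge> 3"
    using assms(1,5) by (simp add: card_Diff_subset)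
  then obtain B where "B \<subseteq> UNIV - {m, z}" "card B = 3"
    by (metis obtain_subset_with_card_n)
  then obtain a b c where abc: "distinct [m, a, b, c]" "distinct [z, a, b, c]"
    unfolding card_3_iff by auto
  define jsq where "jsq p = cycle_matrix p a b c ** cycle_matrix p a b c
                            + cycle_matrix p a b c ** cycle_matrix p a b c" for p
  have jsq_L: "jsq p \<in> L" if "distinct [p, a, b, c]" for p
  proof -
    have "cycle_matrix p a b c \<in> L"
      using that assms(4) cycle_matrix_in_Wn[of p a b c] by auto
    then show ?thesis using assms(3) unfolding jordan_closed_def jsq_def by blast
  qed
  have jsq_sym: "jsq p \<in> {Q. transpose Q = Q}" for p
    unfolding jsq_def
    by (intro subspace_add subspace_symmetric_matrices)
      (simp_all add: matrix_transpose_mul transpose_cycle_matrix)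
  define D where "D = (1/4) *\<^sub>R (jsq m - jsq z)"
  have "D \<in> L \<inter> {R. transpose R = R}"
    unfolding D_def using jsq_L[OF abc(1)] jsq_L[OF abc(2)] jsq_sym
    by (intro IntI subspace_scale subspace_diff assms(2) subspace_symmetric_matrices)
  moreover have "(\<chi> i. D $ i $ i) = axis m 1 - axis z 1"
    using abc assms(5)
    by (auto simp: D_def jsq_def vec_eq_iff axis_def cycle_matrix_square_diagonal)
  ultimately show ?thesis unfolding sym_diagonals_def by force
qed

lemma zero_sum_eq_axis_diff_combination:
  fixes d :: "real ^ 'n"
  assumes "(\<Sum>i\<in>UNIV. d $ i) = 0"
  shows "d = (\<Sum>m\<in>UNIV - {z}. d $ m *\<^sub>R (axis m 1 - axis z 1))"
proof -
  have "(\<Sum>m\<in>UNIV - {z}. d $ m *\<^sub>R (axis m 1 - axis z 1)) $ x = d $ x" for x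
  proof (cases "x = z")
    case True
    have "(\<Sum>m\<in>UNIV - {z}. d $ m) = - d $ z"
      using assms by (simp add: sum_diff1)
    then show ?thesis using True by (simp add: axis_def sum_negf)
  next
    case False
    then show ?thesis
      by (simp add: axis_def if_distrib[where f="\<lambda>t. _ * t"] eq_commute[of x] sum.delta' cong: if_cong)
  qed
  then show ?thesis by (simp add: vec_eq_iff)
qed

lemma zero_sum_in_sym_diagonals:
  fixes L :: "(real ^ 'n ^ 'n) set"
  assumes "CARD('n) > 4" "subspace L" "jordan_closed L" "Wn \<subseteq> L"
    and "(\<Sum>i\<in>UNIV. d $ i) = 0"
  shows "d \<in> sym_diagonals L"
proof -
  fix z :: 'n
  have "(\<Sum>m\<in>UNIV - {z}. d $ m *\<^sub>R (axis m 1 - axis z 1)) \<in> sym_diagonals L"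
    using axis_diff_in_sym_diagonals[OF assms(1-4)]
    by (intro subspace_sum subspace_scale subspace_sym_diagonals assms(2)) auto
  then show ?thesis using zero_sum_eq_axis_diff_combination[OF assms(5)] by simp
qed

lemma sym_diagonals_eq_UNIV:
  fixes L :: "(real ^ 'n ^ 'n) set"
  assumes "CARD('n) > 4" "subspace L" "jordan_closed L" "Wn \<subseteq> L" "Jmat \<in> L"
  shows "sym_diagonals L = UNIV"
proof (intro set_eqI iffI UNIV_I)
  fix d :: "real ^ 'n"
  define n where "n = real CARD('n)"
  have n: "n > 4" using assms(1) by (simp add: n_def)
  define j :: "real ^ 'n" where "j = (\<chi> i. 1 / n - 1)"
  have "transpose Jmat = Jmat"
    by (simp add: Jmat_def transpose_def vec_eq_iff)
  then have j: "j \<in> sym_diagonals L"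
    using assms(5) unfolding sym_diagonals_def
    by (intro image_eqI[of _ _ Jmat]) (auto simp: Jmat_def j_def n_def vec_eq_iff)
  \<comment> \<open>j has trace 1 - n \<noteq> 0, so a multiple of it corrects the trace of d\<close>
  define c where "c = (\<Sum>i\<in>UNIV. d $ i) / (1 - n)"
  have "(\<Sum>i\<in>UNIV. (d - c *\<^sub>R j) $ i) = (\<Sum>i\<in>UNIV. d $ i) - c * (1 - n)"
    using n by (simp add: j_def n_def sum_subtractf right_diff_distrib)
  then have "(\<Sum>i\<in>UNIV. (d - c *\<^sub>R j) $ i) = 0"
    using n by (simp add: c_def)
  then have "d - c *\<^sub>R j \<in> sym_diagonals L"
    using zero_sum_in_sym_diagonals[OF assms(1-4)] by blast
  then have "(d - c *\<^sub>R j) + c *\<^sub>R j \<in> sym_diagonals L"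
    using j by (intro subspace_add subspace_scale subspace_sym_diagonals assms(2))
  then show "d \<in> sym_diagonals L" by simp
qed

lemma Symm_subset_if_all_diagonals:
  fixes L :: "(real ^ 'n ^ 'n) set"
  assumes "subspace L" "L \<subseteq> Ln" "Wn \<subseteq> L" "sym_diagonals L = UNIV"
  shows "Symm \<subseteq> L"
proof
  fix Q :: "real ^ 'n ^ 'n" assume Q: "Q \<in> Symm"
  have "(\<chi> i. Q $ i $ i) \<in> sym_diagonals L" using assms(4) by simp
  then obtain R where R: "R \<in> L" "transpose R = R" "\<And>i. R $ i $ i = Q $ i $ i"
    unfolding sym_diagonals_def by (auto simp: vec_eq_iff)
  have "Q - R \<in> Ln"
    using Q R(1) assms(2) subspace_Ln unfolding Symm_def by (auto intro: subspace_diff)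
  then have "Q - R \<in> Wn"
    using Q R unfolding Wn_def Symm_def by (auto simp: transpose_def vec_eq_iff)
  then have "(Q - R) + R \<in> L" using R(1) assms(3) by (intro subspace_add assms(1)) auto
  then show "Q \<in> L" by simp
qed

theorem mainTheorem15:
  fixes L :: "(real ^ 'n ^ 'n) set"
  assumes "CARD('n) > 4"
    and "subspace L"
    and "L \<subseteq> Ln"
    and "jordan_closed L"
    and "\<And>\<sigma> X. \<sigma> permutes (UNIV :: 'n set) \<Longrightarrow> X \<in> L \<Longrightarrow> perm_act \<sigma> X \<in> L"
    and "Jmat \<in> L"
    and "Wn \<subseteq> L"
  shows "Symm \<subseteq> L"
  using Symm_subset_if_all_diagonals[OF assms(2,3,7)] sym_diagonals_eq_UNIV[OF assms(1,2,4,7,6)]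
  by blast

end
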